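(* Let $S$ be a finitely generated semigroup and let $S_+$ denote the set of non-invertible elements of $S$. Let $T=\bigcup_{i=1}^kS\bullet t_i$ be a finitely generated $S$-module such that $s\bullet t=t$ (with $s\in S$, $t\in T$) occurs only when $s$ is a unit of $S$. Then the set $T_{\mathrm{prim}}:=T\smallsetminus(S_+\bullet T)$ is finite and generates $T$ over $S$.
   Context: Semigroups are commutative monoids (written additively, with identity $0$) that are subsemigroups of finitely generated abelian groups such that their image in the torsion-free quotient of the ambient group is pointed (has no nonzero units). An $S$-module is a set $T$ with an action $\bullet\colon S\times T\to T$ satisfying $(s+s')\bullet t=s\bullet(s'\bullet t)$ and $0\bullet t=t$. $T$ is finitely generated over $S$ if $T=\bigcup_{i=1}^kS\bullet t_i$ for finitely many $t_i\in T$; a subset generates $T$ if $T$ is the union of the orbits $S\bullet t$ over its elements. $S_+\bullet T=\{s\bullet t\mid s\in S_+, t\in T\}$. *)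

theory Defs
  imports Main
begin

inductive_set monoid_span :: "'a::comm_monoid_add set \<Rightarrow> 'a set" for F where
  zero: "0 \<in> monoid_span F"
| gen: "x \<in> F \<Longrightarrow> x \<in> monoid_span F"
| add: "x \<in> monoid_span F \<Longrightarrow> y \<in> monoid_span F \<Longrightarrow> x + y \<in> monoid_span F"

inductive_set group_span :: "'a::ab_group_add set \<Rightarrow> 'a set" for F where
  zero: "0 \<in> group_span F"
| gen: "x \<in> F \<Longrightarrow> x \<in> group_span F"
| neg: "x \<in> group_span F \<Longrightarrow> - x \<in> group_span F"
| add: "x \<in> group_span F \<Longrightarrow> y \<in> group_span F \<Longrightarrow> x + y \<in> group_span F"

definition nsum :: "nat \<Rightarrow> 'a::comm_monoid_add \<Rightarrow> 'a" where
  "nsum n x = (\<Sum>i<n. x)"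

definition is_torsion :: "'a::ab_group_add \<Rightarrow> bool" where
  "is_torsion x \<longleftrightarrow> (\<exists>n>0. nsum n x = 0)"

text \<open>A semigroup in the sense of the paper: a submonoid S of a finitely generated
  abelian group G (here a finitely generated subgroup of an ambient abelian group type)
  whose image in the torsion-free quotient G / tors(G) is pointed.\<close>
definition paper_semigroup :: "'a::ab_group_add set \<Rightarrow> 'a set \<Rightarrow> bool" where
  "paper_semigroup G S \<longleftrightarrow>
     (\<exists>F. finite F \<and> G = group_span F) \<and>
     S \<subseteq> G \<and> 0 \<in> S \<and> (\<forall>x\<in>S. \<forall>y\<in>S. x + y \<in> S) \<and>
     (\<forall>x\<in>S. \<forall>y\<in>S. is_torsion (x + y) \<longrightarrow> is_torsion x)"

definition fg_monoid :: "'a::comm_monoid_add set \<Rightarrow> bool" where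
  "fg_monoid S \<longleftrightarrow> (\<exists>F. finite F \<and> F \<subseteq> S \<and> S = monoid_span F)"

definition units_of_monoid :: "'a::comm_monoid_add set \<Rightarrow> 'a set" where
  "units_of_monoid S = {s\<in>S. \<exists>s'\<in>S. s + s' = 0}"

definition nonunits :: "'a::comm_monoid_add set \<Rightarrow> 'a set" where
  "nonunits S = S - units_of_monoid S"

definition is_module :: "'a::comm_monoid_add set \<Rightarrow> 'b set \<Rightarrow> ('a \<Rightarrow> 'b \<Rightarrow> 'b) \<Rightarrow> bool" where
  "is_module S T act \<longleftrightarrow>
     (\<forall>s\<in>S. \<forall>t\<in>T. act s t \<in> T) \<and>
     (\<forall>s\<in>S. \<forall>s'\<in>S. \<forall>t\<in>T. act (s + s') t = act s (act s' t)) \<and>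
     (\<forall>t\<in>T. act 0 t = t)"

definition orbit_union :: "'a set \<Rightarrow> ('a \<Rightarrow> 'b \<Rightarrow> 'b) \<Rightarrow> 'b set \<Rightarrow> 'b set" where
  "orbit_union S act X = (\<Union>t\<in>X. (\<lambda>s. act s t) ` S)"

definition generates :: "'a set \<Rightarrow> 'b set \<Rightarrow> ('a \<Rightarrow> 'b \<Rightarrow> 'b) \<Rightarrow> 'b set \<Rightarrow> bool" where
  "generates S T act X \<longleftrightarrow> X \<subseteq> T \<and> T = orbit_union S act X"

definition fg_module :: "'a set \<Rightarrow> 'b set \<Rightarrow> ('a \<Rightarrow> 'b \<Rightarrow> 'b) \<Rightarrow> bool" where
  "fg_module S T act \<longleftrightarrow> (\<exists>X. finite X \<and> generates S T act X)"

definition set_act :: "('a \<Rightarrow> 'b \<Rightarrow> 'b) \<Rightarrow> 'a set \<Rightarrow> 'b set \<Rightarrow> 'b set" where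
  "set_act act A T = {act s t | s t. s \<in> A \<and> t \<in> T}"

end

theory Submission
  imports Defs
begin

text \<open>The units of \<open>S\<close> are torsion, by pointedness, and they form the submonoid spanned by
  the finitely many units among the generators of \<open>S\<close>; a finitely generated monoid of torsion
  elements is finite. A primitive element \<open>s \<bullet> x\<close>, with \<open>x\<close> one of the finitely many module
  generators, must have \<open>s\<close> a unit, so there are finitely many of them. For generation, relate
  two generators when \<open>x = \<sigma> \<bullet> y\<close> with \<open>\<sigma>\<close> a non-unit: this relation is transitive, and the
  hypothesis on fixed points makes it irreflexive, so it is well founded on the finite set of
  generators; descending along it from a generator ends in a primitive element.\<close>

lemma nsum_Suc: "nsum (Suc n) x = nsum n x + x"
  by (simp add: nsum_def)

lemma nsum_add: "nsum (m + k) x = nsum m x + nsum k x"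
  by (induction k) (simp_all add: nsum_Suc nsum_def[of 0] add.assoc)

lemma nsum_mult_eq_0: "nsum n x = 0 \<Longrightarrow> nsum (q * n) x = 0"
  by (induction q) (simp_all add: nsum_add nsum_def[of 0])

lemma nsum_mod:
  assumes "nsum n x = 0"
  shows "nsum k x = nsum (k mod n) x"
proof -
  have "nsum k x = nsum (k div n * n) x + nsum (k mod n) x"
    by (metis nsum_add div_mult_mod_eq)
  then show ?thesis
    using nsum_mult_eq_0[OF assms] by simp
qed

lemma monoid_span_insert_decomp:
  "x \<in> monoid_span (insert e E) \<Longrightarrow> \<exists>k. \<exists>y\<in>monoid_span E. x = nsum k e + y"
proof (induction rule: monoid_span.induct)
  case zero
  show ?case
    by (intro exI[of _ 0] bexI[of _ 0]) (auto simp: nsum_def intro: monoid_span.zero)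
next
  case (gen x)
  then show ?case
  proof
    assume "x = e"
    then show ?thesis
      by (intro exI[of _ 1] bexI[of _ 0]) (auto simp: nsum_def intro: monoid_span.zero)
  next
    assume "x \<in> E"
    then show ?thesis
      by (intro exI[of _ 0] bexI[of _ x]) (auto simp: nsum_def intro: monoid_span.gen)
  qed
next
  case (add x y)
  then obtain k y1 k' y2 where "y1 \<in> monoid_span E" "x = nsum k e + y1"
    and "y2 \<in> monoid_span E" "y = nsum k' e + y2"
    by blast
  then show ?case
    by (intro exI[of _ "k + k'"] bexI[of _ "y1 + y2"])
       (auto simp: nsum_add algebra_simps intro: monoid_span.add)
qed

lemma monoid_span_empty: "monoid_span {} = {0}"
proof -
  have "x = 0" if "x \<in> monoid_span {}" for x :: 'a
    using that by (induction rule: monoid_span.induct) auto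
  then show ?thesis
    using monoid_span.zero by blast
qed

lemma finite_monoid_span_torsion:
  fixes E :: "'a::ab_group_add set"
  assumes "finite E" and "\<forall>e\<in>E. is_torsion e"
  shows "finite (monoid_span E)"
  using assms
proof (induction E rule: finite_induct)
  case empty
  show ?case
    by (simp add: monoid_span_empty)
next
  case (insert e E)
  then obtain n where n: "n > 0" "nsum n e = 0"
    by (auto simp: is_torsion_def)
  have "monoid_span (insert e E) \<subseteq> (\<lambda>(k, y). nsum k e + y) ` ({..<n} \<times> monoid_span E)"
  proof
    fix x
    assume "x \<in> monoid_span (insert e E)"
    then obtain k y where y: "y \<in> monoid_span E" and "x = nsum k e + y"
      using monoid_span_insert_decomp by blast
    then have "x = nsum (k mod n) e + y"
      using nsum_mod[OF n(2)] by simp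
    then show "x \<in> (\<lambda>(k, y). nsum k e + y) ` ({..<n} \<times> monoid_span E)"
      using y n(1) by force
  qed
  moreover have "finite (monoid_span E)"
    using insert by simp
  ultimately show ?case
    using finite_subset by blast
qed

locale submonoid =
  fixes S :: "'a::comm_monoid_add set"
  assumes zero_mem: "0 \<in> S"
    and add_mem: "s \<in> S \<Longrightarrow> s' \<in> S \<Longrightarrow> s + s' \<in> S"
begin

lemma units_add_left:
  assumes "a \<in> S" "b \<in> S" "a + b \<in> units_of_monoid S"
  shows "a \<in> units_of_monoid S"
proof -
  obtain w where "w \<in> S" "a + b + w = 0"
    using assms(3) by (auto simp: units_of_monoid_def)
  then show ?thesis
    unfolding units_of_monoid_def
    using assms add_mem by (intro CollectI conjI bexI[of _ "b + w"]) (auto simp: add.assoc)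
qed

lemma nonunits_add:
  assumes "a \<in> nonunits S" "b \<in> S"
  shows "a + b \<in> nonunits S"
  using assms units_add_left add_mem by (auto simp: nonunits_def)

end

interpretation monoid_span: submonoid "monoid_span F"
  by unfold_locales (auto intro: monoid_span.zero monoid_span.add)

lemma units_of_monoid_span:
  "units_of_monoid (monoid_span F) \<subseteq> monoid_span (F \<inter> units_of_monoid (monoid_span F))"
proof -
  have "x \<in> monoid_span (F \<inter> units_of_monoid (monoid_span F))"
    if "x \<in> monoid_span F" "x \<in> units_of_monoid (monoid_span F)" for x
    using that
  proof (induction rule: monoid_span.induct)
    case zero
    show ?case
      by (rule monoid_span.zero)
  next
    case (gen x)
    then show ?case
      by (auto intro: monoid_span.gen)
  next
    case (add x y)
    then have "x \<in> units_of_monoid (monoid_span F)" "y \<in> units_of_monoid (monoid_span F)"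
      using monoid_span.units_add_left add.commute by metis+
    with add.IH show ?case
      by (blast intro: monoid_span.add)
  qed
  then show ?thesis
    by (auto simp: units_of_monoid_def)
qed

lemma paper_semigroup_submonoid: "paper_semigroup G S \<Longrightarrow> submonoid S"
  by unfold_locales (auto simp: paper_semigroup_def)

lemma paper_semigroup_unit_torsion:
  assumes "paper_semigroup G S" "u \<in> units_of_monoid S"
  shows "is_torsion u"
proof -
  obtain w where "u \<in> S" "w \<in> S" "u + w = 0"
    using assms(2) by (auto simp: units_of_monoid_def)
  moreover have "is_torsion (u + w)"
    using \<open>u + w = 0\<close> by (auto simp: is_torsion_def nsum_def intro: exI[of _ 1])
  ultimately show ?thesis
    using assms(1) unfolding paper_semigroup_def by blast
qed

lemma finite_units_of_paper_semigroup:
  assumes "paper_semigroup G S" "fg_monoid S"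
  shows "finite (units_of_monoid S)"
proof -
  obtain F where "finite F" and S: "S = monoid_span F"
    using assms(2) by (auto simp: fg_monoid_def)
  have "\<forall>e\<in>F \<inter> units_of_monoid S. is_torsion e"
    using paper_semigroup_unit_torsion[OF assms(1)] by blast
  with \<open>finite F\<close> have "finite (monoid_span (F \<inter> units_of_monoid S))"
    by (simp add: finite_monoid_span_torsion)
  then show ?thesis
    using units_of_monoid_span[of F] S finite_subset by metis
qed

definition primitive_elements :: "'a::comm_monoid_add set \<Rightarrow> 'b set \<Rightarrow> ('a \<Rightarrow> 'b \<Rightarrow> 'b) \<Rightarrow> 'b set"
  where "primitive_elements S T act = T - set_act act (nonunits S) T"

lemma finite_primitive_elements:
  assumes "generates S T act X" "finite X" "finite (units_of_monoid S)"
  shows "finite (primitive_elements S T act)"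
proof -
  have "primitive_elements S T act \<subseteq> (\<lambda>(u, x). act u x) ` (units_of_monoid S \<times> X)"
  proof
    fix p
    assume p: "p \<in> primitive_elements S T act"
    then obtain s x where "s \<in> S" "x \<in> X" and p_eq: "p = act s x"
      using assms(1) by (auto simp: primitive_elements_def generates_def orbit_union_def)
    moreover have "s \<notin> nonunits S"
      using p p_eq \<open>x \<in> X\<close> assms(1) by (auto simp: primitive_elements_def set_act_def generates_def)
    ultimately show "p \<in> (\<lambda>(u, x). act u x) ` (units_of_monoid S \<times> X)"
      by (force simp: nonunits_def)
  qed
  then show ?thesis
    using assms(2,3) finite_subset by blast
qed

locale submonoid_module = submonoid S
  for S :: "'a::comm_monoid_add set" +
  fixes T :: "'b set" and act :: "'a \<Rightarrow> 'b \<Rightarrow> 'b"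
  assumes module: "is_module S T act"
begin

lemma act_mem: "s \<in> S \<Longrightarrow> t \<in> T \<Longrightarrow> act s t \<in> T"
  using module by (simp add: is_module_def)

lemma act_add: "s \<in> S \<Longrightarrow> s' \<in> S \<Longrightarrow> t \<in> T \<Longrightarrow> act (s + s') t = act s (act s' t)"
  using module by (simp add: is_module_def)

lemma act_zero: "t \<in> T \<Longrightarrow> act 0 t = t"
  using module by (simp add: is_module_def)

lemma orbit_union_subset:
  assumes "A \<subseteq> T" "Y \<subseteq> orbit_union S act A"
  shows "orbit_union S act Y \<subseteq> orbit_union S act A"
proof
  fix t
  assume "t \<in> orbit_union S act Y"
  then obtain a y where "a \<in> S" "y \<in> Y" "t = act a y"
    by (auto simp: orbit_union_def)
  moreover obtain b p where "b \<in> S" "p \<in> A" "y = act b p"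
    using \<open>y \<in> Y\<close> assms(2) by (auto simp: orbit_union_def)
  ultimately have "t = act (a + b) p" "a + b \<in> S"
    using assms(1) act_add add_mem by auto
  with \<open>p \<in> A\<close> show "t \<in> orbit_union S act A"
    by (auto simp: orbit_union_def)
qed

definition nonunit_step :: "'b set \<Rightarrow> ('b \<times> 'b) set"
  where "nonunit_step X = {(y, x). y \<in> X \<and> x \<in> X \<and> (\<exists>\<sigma>\<in>nonunits S. x = act \<sigma> y)}"

lemma wf_nonunit_step:
  assumes "finite X" "X \<subseteq> T"
    and fixed: "\<forall>s\<in>S. \<forall>t\<in>T. act s t = t \<longrightarrow> s \<in> units_of_monoid S"
  shows "wf (nonunit_step X)"
proof (rule finite_acyclic_wf)
  show "finite (nonunit_step X)"
    using assms(1) finite_subset[of "nonunit_step X" "X \<times> X"]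
    by (auto simp: nonunit_step_def)
  have "trans (nonunit_step X)"
  proof (rule transI)
    fix x y z
    assume "(x, y) \<in> nonunit_step X" "(y, z) \<in> nonunit_step X"
    then obtain a b where a: "a \<in> nonunits S" "y = act a x" and b: "b \<in> nonunits S" "z = act b y"
      and "x \<in> X" "z \<in> X"
      by (auto simp: nonunit_step_def)
    then have "z = act (b + a) x"
      using act_add[of b a x] assms(2) by (auto simp: nonunits_def)
    moreover have "b + a \<in> nonunits S"
      using a b nonunits_add by (simp add: nonunits_def)
    ultimately show "(x, z) \<in> nonunit_step X"
      using \<open>x \<in> X\<close> \<open>z \<in> X\<close> by (auto simp: nonunit_step_def)
  qed
  moreover have "(x, x) \<notin> nonunit_step X" for x
  proof
    assume "(x, x) \<in> nonunit_step X"
    then obtain \<sigma> where "\<sigma> \<in> nonunits S" "x = act \<sigma> x" "x \<in> X"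
      unfolding nonunit_step_def by blast
    then show False
      using fixed assms(2) unfolding nonunits_def by (metis DiffE subsetD)
  qed
  ultimately show "acyclic (nonunit_step X)"
    by (simp add: acyclic_def)
qed

lemma generator_in_orbit_primitive:
  assumes gen: "generates S T act X" and "finite X"
    and fixed: "\<forall>s\<in>S. \<forall>t\<in>T. act s t = t \<longrightarrow> s \<in> units_of_monoid S"
    and "x \<in> X"
  shows "x \<in> orbit_union S act (primitive_elements S T act)"
proof -
  let ?P = "primitive_elements S T act"
  have XT: "X \<subseteq> T" and T: "T = orbit_union S act X"
    using gen by (auto simp: generates_def)
  have "wf (nonunit_step X)"
    using wf_nonunit_step[OF \<open>finite X\<close> XT fixed] .
  then show ?thesis
    using \<open>x \<in> X\<close>
  proof (induction x rule: wf_induct_rule)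
    case (less x)
    show ?case
    proof (cases "x \<in> set_act act (nonunits S) T")
      case False
      with \<open>x \<in> X\<close> XT have "x \<in> ?P"
        by (auto simp: primitive_elements_def)
      then show ?thesis
        using act_zero XT \<open>x \<in> X\<close> zero_mem unfolding orbit_union_def by force
    next
      case True
      then obtain \<sigma> t where \<sigma>: "\<sigma> \<in> nonunits S" and "t \<in> T" "x = act \<sigma> t"
        by (auto simp: set_act_def)
      then obtain b y where "b \<in> S" "y \<in> X" "t = act b y"
        using T by (auto simp: orbit_union_def)
      moreover have "\<sigma> \<in> S"
        using \<sigma> by (simp add: nonunits_def)
      ultimately have "x = act (\<sigma> + b) y" "\<sigma> + b \<in> nonunits S"
        using \<open>x = act \<sigma> t\<close> act_add XT \<sigma> nonunits_add by auto
      with \<open>x \<in> X\<close> \<open>y \<in> X\<close> have "(y, x) \<in> nonunit_step X"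
        by (auto simp: nonunit_step_def)
      with less.IH \<open>y \<in> X\<close> have "y \<in> orbit_union S act ?P"
        by blast
      moreover have "x \<in> orbit_union S act {y}"
        using \<open>x = act (\<sigma> + b) y\<close> \<open>\<sigma> + b \<in> nonunits S\<close>
        by (auto simp: orbit_union_def nonunits_def)
      ultimately show ?thesis
        using orbit_union_subset[of ?P "{y}"] by (auto simp: primitive_elements_def)
    qed
  qed
qed

lemma generates_primitive_elements:
  assumes "generates S T act X" "finite X"
    and "\<forall>s\<in>S. \<forall>t\<in>T. act s t = t \<longrightarrow> s \<in> units_of_monoid S"
  shows "generates S T act (primitive_elements S T act)"
proof -
  let ?P = "primitive_elements S T act"
  have PT: "?P \<subseteq> T"
    by (auto simp: primitive_elements_def)
  have "T = orbit_union S act X"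
    using assms(1) unfolding generates_def by blast
  also have "\<dots> \<subseteq> orbit_union S act ?P"
    using generator_in_orbit_primitive[OF assms] by (intro orbit_union_subset[OF PT] subsetI)
  finally have "T \<subseteq> orbit_union S act ?P" .
  moreover have "orbit_union S act ?P \<subseteq> T"
    using act_mem PT by (auto simp: orbit_union_def)
  ultimately show ?thesis
    using PT unfolding generates_def by blast
qed

end

theorem lemma4p2:
  fixes G S :: "'a::ab_group_add set" and T :: "'b set" and act :: "'a \<Rightarrow> 'b \<Rightarrow> 'b"
  assumes "paper_semigroup G S"
    and "fg_monoid S"
    and "is_module S T act"
    and "fg_module S T act"
    and "\<forall>s\<in>S. \<forall>t\<in>T. act s t = t \<longrightarrow> s \<in> units_of_monoid S"
  shows "finite (T - set_act act (nonunits S) T) \<and>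
         generates S T act (T - set_act act (nonunits S) T)"
proof -
  interpret submonoid_module S T act
    using paper_semigroup_submonoid[OF assms(1)] assms(3)
    by (simp add: submonoid_module_def submonoid_module_axioms_def)
  obtain X where X: "generates S T act X" "finite X"
    using assms(4) by (auto simp: fg_module_def)
  have "finite (primitive_elements S T act)"
    using finite_primitive_elements[OF X(1,2)]
      finite_units_of_paper_semigroup[OF assms(1,2)] .
  moreover have "generates S T act (primitive_elements S T act)"
    using generates_primitive_elements[OF X assms(5)] .
  ultimately show ?thesis
    by (simp add: primitive_elements_def)
qed

end
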